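(* Let $(E,\mu)$ and $(F,\nu)$ be fuzzy Riesz spaces and $T:E\rightarrow F$ a fuzzy Riesz homomorphism. Then the image under $T$ of a fuzzy projection band in $E$ is a fuzzy projection band in $T(E)$.
   Context: A fuzzy order on a real vector space $E$ is a map $\mu:E\times E\to[0,1]$ with $\mu(x,x)=1$; $\mu(x,y)+\mu(y,x)>1$ implies $x=y$; and $\mu(x,z)\ge\sup_{y}\min(\mu(x,y),\mu(y,z))$. Write $x\le y$ for $\mu(x,y)>\frac12$; suprema/infima are taken with respect to this relation. $(E,\mu)$ is a fuzzy ordered linear space if $\mu(x_1,x_2)>\frac12$ implies $\mu(x_1,x_2)\le\mu(x_1+x,x_2+x)$ for all $x$ and $\mu(x_1,x_2)\le\mu(\alpha x_1,\alpha x_2)$ for all $\alpha>0$; it is a fuzzy Riesz space if $x\vee y=\sup\{x,y\}$ and $x\wedge y=\inf\{x,y\}$ exist for all $x,y$. $|x|=x\vee(-x)$. A fuzzy ideal is a vector subspace $A$ such that $\mu(|x|,|y|)>\frac12$ and $y\in A$ imply $x\in A$. A fuzzy band is a fuzzy ideal $B$ such that whenever $D\subseteq B$ and $\sup D$ exists in the space, $\sup D\in B$. $x\perp y$ means $|x|\wedge|y|=0$, and $B^d=\{x: x\perp y\ \forall y\in B\}$. A fuzzy projection band is a fuzzy band $B$ with $E=B\oplus B^d$. A fuzzy Riesz homomorphism is a linear map with $T(x\vee y)=Tx\vee Ty$; $T(E)$ is a fuzzy Riesz subspace of $F$ regarded as a fuzzy Riesz space with the restricted order. *)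

theory Defs
  imports Complex_Main
begin

text \<open>All notions are relativised to a carrier set V (a linear subspace of a real
vector space); the whole space is V = UNIV, and the image space T(E) is V = range T
with the restricted fuzzy order.\<close>

definition fuzzy_order :: "'a set \<Rightarrow> ('a \<Rightarrow> 'a \<Rightarrow> real) \<Rightarrow> bool" where
  "fuzzy_order V \<mu> \<longleftrightarrow>
     (\<forall>x\<in>V. \<forall>y\<in>V. 0 \<le> \<mu> x y \<and> \<mu> x y \<le> 1) \<and>
     (\<forall>x\<in>V. \<mu> x x = 1) \<and>
     (\<forall>x\<in>V. \<forall>y\<in>V. \<mu> x y + \<mu> y x > 1 \<longrightarrow> x = y) \<and>
     (\<forall>x\<in>V. \<forall>z\<in>V. \<mu> x z \<ge> (SUP y\<in>V. min (\<mu> x y) (\<mu> y z)))"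

definition fle :: "('a \<Rightarrow> 'a \<Rightarrow> real) \<Rightarrow> 'a \<Rightarrow> 'a \<Rightarrow> bool" where
  "fle \<mu> x y \<longleftrightarrow> \<mu> x y > 1/2"

definition is_fsup :: "'a set \<Rightarrow> ('a \<Rightarrow> 'a \<Rightarrow> real) \<Rightarrow> 'a set \<Rightarrow> 'a \<Rightarrow> bool" where
  "is_fsup V \<mu> D s \<longleftrightarrow> s \<in> V \<and> (\<forall>d\<in>D. fle \<mu> d s) \<and>
     (\<forall>u\<in>V. (\<forall>d\<in>D. fle \<mu> d u) \<longrightarrow> fle \<mu> s u)"

definition is_finf :: "'a set \<Rightarrow> ('a \<Rightarrow> 'a \<Rightarrow> real) \<Rightarrow> 'a set \<Rightarrow> 'a \<Rightarrow> bool" where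
  "is_finf V \<mu> D s \<longleftrightarrow> s \<in> V \<and> (\<forall>d\<in>D. fle \<mu> s d) \<and>
     (\<forall>u\<in>V. (\<forall>d\<in>D. fle \<mu> u d) \<longrightarrow> fle \<mu> u s)"

definition fuzzy_ordered_linear_space :: "'a::real_vector set \<Rightarrow> ('a \<Rightarrow> 'a \<Rightarrow> real) \<Rightarrow> bool" where
  "fuzzy_ordered_linear_space V \<mu> \<longleftrightarrow> subspace V \<and> fuzzy_order V \<mu> \<and>
     (\<forall>x1\<in>V. \<forall>x2\<in>V. \<mu> x1 x2 > 1/2 \<longrightarrow>
        (\<forall>x\<in>V. \<mu> x1 x2 \<le> \<mu> (x1 + x) (x2 + x)) \<and>
        (\<forall>\<alpha>::real. \<alpha> > 0 \<longrightarrow> \<mu> x1 x2 \<le> \<mu> (\<alpha> *\<^sub>R x1) (\<alpha> *\<^sub>R x2)))"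

definition fuzzy_riesz_space :: "'a::real_vector set \<Rightarrow> ('a \<Rightarrow> 'a \<Rightarrow> real) \<Rightarrow> bool" where
  "fuzzy_riesz_space V \<mu> \<longleftrightarrow> fuzzy_ordered_linear_space V \<mu> \<and>
     (\<forall>x\<in>V. \<forall>y\<in>V. (\<exists>s. is_fsup V \<mu> {x, y} s) \<and> (\<exists>i. is_finf V \<mu> {x, y} i))"

definition fsup :: "'a set \<Rightarrow> ('a \<Rightarrow> 'a \<Rightarrow> real) \<Rightarrow> 'a \<Rightarrow> 'a \<Rightarrow> 'a" where
  "fsup V \<mu> x y = (THE s. is_fsup V \<mu> {x, y} s)"

definition finf :: "'a set \<Rightarrow> ('a \<Rightarrow> 'a \<Rightarrow> real) \<Rightarrow> 'a \<Rightarrow> 'a \<Rightarrow> 'a" where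
  "finf V \<mu> x y = (THE s. is_finf V \<mu> {x, y} s)"

definition fabs :: "'a::real_vector set \<Rightarrow> ('a \<Rightarrow> 'a \<Rightarrow> real) \<Rightarrow> 'a \<Rightarrow> 'a" where
  "fabs V \<mu> x = fsup V \<mu> x (- x)"

definition fuzzy_ideal :: "'a::real_vector set \<Rightarrow> ('a \<Rightarrow> 'a \<Rightarrow> real) \<Rightarrow> 'a set \<Rightarrow> bool" where
  "fuzzy_ideal V \<mu> A \<longleftrightarrow> subspace A \<and> A \<subseteq> V \<and>
     (\<forall>x\<in>V. \<forall>y\<in>A. fle \<mu> (fabs V \<mu> x) (fabs V \<mu> y) \<longrightarrow> x \<in> A)"

definition fuzzy_band :: "'a::real_vector set \<Rightarrow> ('a \<Rightarrow> 'a \<Rightarrow> real) \<Rightarrow> 'a set \<Rightarrow> bool" where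
  "fuzzy_band V \<mu> B \<longleftrightarrow> fuzzy_ideal V \<mu> B \<and>
     (\<forall>D s. D \<subseteq> B \<longrightarrow> is_fsup V \<mu> D s \<longrightarrow> s \<in> B)"

definition fdisjoint :: "'a::real_vector set \<Rightarrow> ('a \<Rightarrow> 'a \<Rightarrow> real) \<Rightarrow> 'a \<Rightarrow> 'a \<Rightarrow> bool" where
  "fdisjoint V \<mu> x y \<longleftrightarrow> finf V \<mu> (fabs V \<mu> x) (fabs V \<mu> y) = 0"

definition fdisjoint_compl :: "'a::real_vector set \<Rightarrow> ('a \<Rightarrow> 'a \<Rightarrow> real) \<Rightarrow> 'a set \<Rightarrow> 'a set" where
  "fdisjoint_compl V \<mu> B = {x \<in> V. \<forall>y\<in>B. fdisjoint V \<mu> x y}"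

definition fuzzy_projection_band :: "'a::real_vector set \<Rightarrow> ('a \<Rightarrow> 'a \<Rightarrow> real) \<Rightarrow> 'a set \<Rightarrow> bool" where
  "fuzzy_projection_band V \<mu> B \<longleftrightarrow> fuzzy_band V \<mu> B \<and>
     (\<forall>x\<in>V. \<exists>b\<in>B. \<exists>c\<in>fdisjoint_compl V \<mu> B. x = b + c) \<and>
     B \<inter> fdisjoint_compl V \<mu> B = {0}"

definition fuzzy_riesz_hom ::
  "('a::real_vector \<Rightarrow> 'a \<Rightarrow> real) \<Rightarrow> ('b::real_vector \<Rightarrow> 'b \<Rightarrow> real) \<Rightarrow> ('a \<Rightarrow> 'b) \<Rightarrow> bool" where
  "fuzzy_riesz_hom \<mu> \<nu> T \<longleftrightarrow> linear T \<and>
     (\<forall>x y. T (fsup UNIV \<mu> x y) = fsup UNIV \<nu> (T x) (T y))"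

end

theory Submission
  imports Defs
begin

(* The crisp relation "x \<le> y iff \<mu> x y > 1/2" makes a fuzzy Riesz space an ordinary Riesz
   space, so everything reduces to order theory of that relation on a carrier V. Since T
   preserves sups, T(E) is a Riesz subspace of F on which T also preserves infs and moduli,
   hence disjointness; so E = B + B^d is carried to T(E) = T(B) + T(B)^d.
   It remains that in any Riesz space a subspace A with V = A + A^d is a projection band.
   Write x = a + c with a \<in> A, c \<in> A^d. If |x| \<le> |y| with y \<in> A, then c is disjoint
   from x and from a, hence from |c| \<le> |x| + |a|, so c = 0. If x is the supremum of D \<subseteq> A,
   then every d \<in> D gives d - a \<le> c with d - a \<perp> c, so d \<le> a; thus c \<le> 0, and
   c = 0 once more by disjointness (for D = {}, x is the least element, i.e. 0). *)

locale riesz_space_on =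
  fixes V :: "'a::real_vector set" and \<mu> :: "'a \<Rightarrow> 'a \<Rightarrow> real"
  assumes subspace_carrier: "subspace V"
    and fle_refl: "x \<in> V \<Longrightarrow> fle \<mu> x x"
    and fle_antisym: "x \<in> V \<Longrightarrow> y \<in> V \<Longrightarrow> fle \<mu> x y \<Longrightarrow> fle \<mu> y x \<Longrightarrow> x = y"
    and fle_trans: "x \<in> V \<Longrightarrow> y \<in> V \<Longrightarrow> z \<in> V \<Longrightarrow> fle \<mu> x y \<Longrightarrow> fle \<mu> y z \<Longrightarrow> fle \<mu> x z"
    and fle_add_right: "x \<in> V \<Longrightarrow> y \<in> V \<Longrightarrow> z \<in> V \<Longrightarrow> fle \<mu> x y \<Longrightarrow> fle \<mu> (x + z) (y + z)"
    and fle_scaleR: "x \<in> V \<Longrightarrow> y \<in> V \<Longrightarrow> a > 0 \<Longrightarrow> fle \<mu> x y \<Longrightarrow> fle \<mu> (a *\<^sub>R x) (a *\<^sub>R y)"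
    and fsup_exists: "x \<in> V \<Longrightarrow> y \<in> V \<Longrightarrow> \<exists>s. is_fsup V \<mu> {x, y} s"
begin

lemma carrier_0: "0 \<in> V"
  using subspace_carrier real_vector.subspace_0 by blast

lemma carrier_add: "x \<in> V \<Longrightarrow> y \<in> V \<Longrightarrow> x + y \<in> V"
  using subspace_carrier real_vector.subspace_add by blast

lemma carrier_neg: "x \<in> V \<Longrightarrow> - x \<in> V"
  using subspace_carrier real_vector.subspace_neg by blast

lemma carrier_diff: "x \<in> V \<Longrightarrow> y \<in> V \<Longrightarrow> x - y \<in> V"
  using subspace_carrier real_vector.subspace_diff by blast

lemma fle_add_right_cancel:
  "x \<in> V \<Longrightarrow> y \<in> V \<Longrightarrow> z \<in> V \<Longrightarrow> fle \<mu> (x + z) (y + z) \<Longrightarrow> fle \<mu> x y"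
  using fle_add_right[of "x + z" "y + z" "- z"] by (simp add: carrier_add carrier_neg)

lemma fle_minus: "x \<in> V \<Longrightarrow> y \<in> V \<Longrightarrow> fle \<mu> x y \<Longrightarrow> fle \<mu> (- y) (- x)"
  using fle_add_right[of x y "- x - y"] by (simp add: carrier_diff carrier_neg)

lemma fle_add_mono:
  "a \<in> V \<Longrightarrow> b \<in> V \<Longrightarrow> c \<in> V \<Longrightarrow> d \<in> V \<Longrightarrow> fle \<mu> a b \<Longrightarrow> fle \<mu> c d \<Longrightarrow> fle \<mu> (a + c) (b + d)"
  using fle_add_right[of a b c] fle_add_right[of c d b] fle_trans[of "a + c" "b + c" "b + d"]
  by (simp add: carrier_add add.commute)

lemma fle_iff_diff_fle_0: "x \<in> V \<Longrightarrow> y \<in> V \<Longrightarrow> fle \<mu> x y \<longleftrightarrow> fle \<mu> (x - y) 0"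
  using fle_add_right[of x y "- y"] fle_add_right[of "x - y" 0 y]
  by (auto simp: carrier_neg carrier_diff carrier_0)

lemma ex1_is_fsup:
  assumes "x \<in> V" "y \<in> V"
  shows "\<exists>!s. is_fsup V \<mu> {x, y} s"
proof -
  obtain s where s: "is_fsup V \<mu> {x, y} s" using fsup_exists assms by blast
  moreover have "t = s" if "is_fsup V \<mu> {x, y} t" for t
    using s that fle_antisym unfolding is_fsup_def by blast
  ultimately show ?thesis by blast
qed

lemma is_fsup_fsup: "x \<in> V \<Longrightarrow> y \<in> V \<Longrightarrow> is_fsup V \<mu> {x, y} (fsup V \<mu> x y)"
  unfolding fsup_def by (rule theI', rule ex1_is_fsup)

lemma fsup_eqI: "x \<in> V \<Longrightarrow> y \<in> V \<Longrightarrow> is_fsup V \<mu> {x, y} s \<Longrightarrow> fsup V \<mu> x y = s"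
  using ex1_is_fsup is_fsup_fsup by blast

lemma fsup_in: "x \<in> V \<Longrightarrow> y \<in> V \<Longrightarrow> fsup V \<mu> x y \<in> V"
  and fsup_upper1: "x \<in> V \<Longrightarrow> y \<in> V \<Longrightarrow> fle \<mu> x (fsup V \<mu> x y)"
  and fsup_upper2: "x \<in> V \<Longrightarrow> y \<in> V \<Longrightarrow> fle \<mu> y (fsup V \<mu> x y)"
  and fsup_least:
    "x \<in> V \<Longrightarrow> y \<in> V \<Longrightarrow> u \<in> V \<Longrightarrow> fle \<mu> x u \<Longrightarrow> fle \<mu> y u \<Longrightarrow> fle \<mu> (fsup V \<mu> x y) u"
  using is_fsup_fsup unfolding is_fsup_def by blast+

lemma is_finf_minus_fsup_minus:
  assumes x: "x \<in> V" and y: "y \<in> V"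
  shows "is_finf V \<mu> {x, y} (- fsup V \<mu> (- x) (- y))"
proof -
  let ?s = "fsup V \<mu> (- x) (- y)"
  have s: "?s \<in> V" using x y by (simp add: fsup_in carrier_neg)
  have lower: "fle \<mu> (- ?s) x" "fle \<mu> (- ?s) y"
    using fle_minus[OF _ s fsup_upper1[of "- x" "- y"]] fle_minus[OF _ s fsup_upper2[of "- x" "- y"]]
      x y by (simp_all add: carrier_neg)
  have greatest: "fle \<mu> u (- ?s)" if u: "u \<in> V" "fle \<mu> u x" "fle \<mu> u y" for u
  proof -
    have "fle \<mu> ?s (- u)"
      using fsup_least[of "- x" "- y" "- u"] fle_minus[of u x] fle_minus[of u y] u x y
      by (simp add: carrier_neg)
    then show ?thesis using fle_minus[OF s carrier_neg[OF u(1)]] by simp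
  qed
  show ?thesis unfolding is_finf_def using lower greatest s by (auto simp: carrier_neg)
qed

lemma finf_eq_minus_fsup_minus: "x \<in> V \<Longrightarrow> y \<in> V \<Longrightarrow> finf V \<mu> x y = - fsup V \<mu> (- x) (- y)"
  unfolding finf_def
proof (rule the_equality)
  fix t assume "x \<in> V" "y \<in> V" and t: "is_finf V \<mu> {x, y} t"
  then show "t = - fsup V \<mu> (- x) (- y)"
    using is_finf_minus_fsup_minus[of x y] fle_antisym unfolding is_finf_def by blast
qed (rule is_finf_minus_fsup_minus)

lemma finf_in: "x \<in> V \<Longrightarrow> y \<in> V \<Longrightarrow> finf V \<mu> x y \<in> V"
  and finf_lower1: "x \<in> V \<Longrightarrow> y \<in> V \<Longrightarrow> fle \<mu> (finf V \<mu> x y) x"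
  and finf_lower2: "x \<in> V \<Longrightarrow> y \<in> V \<Longrightarrow> fle \<mu> (finf V \<mu> x y) y"
  and finf_greatest:
    "x \<in> V \<Longrightarrow> y \<in> V \<Longrightarrow> u \<in> V \<Longrightarrow> fle \<mu> u x \<Longrightarrow> fle \<mu> u y \<Longrightarrow> fle \<mu> u (finf V \<mu> x y)"
  using is_finf_minus_fsup_minus finf_eq_minus_fsup_minus unfolding is_finf_def by simp_all

lemma finf_commute: "finf V \<mu> x y = finf V \<mu> y x"
  unfolding finf_def by (simp add: insert_commute)

lemma finf_absorb1: "x \<in> V \<Longrightarrow> y \<in> V \<Longrightarrow> fle \<mu> x y \<Longrightarrow> finf V \<mu> x y = x"
  by (meson finf_greatest finf_in finf_lower1 fle_antisym fle_refl)

lemma fabs_in: "x \<in> V \<Longrightarrow> fabs V \<mu> x \<in> V"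
  and fabs_ge: "x \<in> V \<Longrightarrow> fle \<mu> x (fabs V \<mu> x)"
  and fabs_ge_minus: "x \<in> V \<Longrightarrow> fle \<mu> (- x) (fabs V \<mu> x)"
  unfolding fabs_def by (simp_all add: fsup_in fsup_upper1 fsup_upper2 carrier_neg)

lemma fabs_minus: "fabs V \<mu> (- x) = fabs V \<mu> x"
  unfolding fabs_def fsup_def by (simp add: insert_commute)

lemma fabs_nonneg:
  assumes x: "x \<in> V"
  shows "fle \<mu> 0 (fabs V \<mu> x)"
proof -
  have a: "fabs V \<mu> x \<in> V" using fabs_in x .
  have "fle \<mu> (x + - x) (fabs V \<mu> x + fabs V \<mu> x)"
    using fle_add_mono[OF x a carrier_neg[OF x] a fabs_ge[OF x] fabs_ge_minus[OF x]] .
  then have "fle \<mu> ((1/2) *\<^sub>R 0) ((1/2) *\<^sub>R (fabs V \<mu> x + fabs V \<mu> x))"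
    using fle_scaleR[of 0 "fabs V \<mu> x + fabs V \<mu> x" "1/2"] by (simp add: carrier_0 carrier_add a)
  then show ?thesis by (simp add: scaleR_2[symmetric])
qed

lemma fabs_nonpos:
  assumes x: "x \<in> V" and x0: "fle \<mu> x 0"
  shows "fabs V \<mu> x = - x"
proof -
  have "fle \<mu> 0 (- x)" using fle_minus[OF x carrier_0 x0] by simp
  then have "fle \<mu> x (- x)" using fle_trans x x0 carrier_0 carrier_neg by blast
  then have "fle \<mu> (fabs V \<mu> x) (- x)"
    unfolding fabs_def using fsup_least x fle_refl carrier_neg by blast
  then show ?thesis using fabs_ge_minus x fle_antisym fabs_in carrier_neg by blast
qed

lemma fabs_0: "fabs V \<mu> 0 = 0"
  using fabs_nonpos[OF carrier_0 fle_refl[OF carrier_0]] by simp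

lemma fabs_eq_0D:
  assumes x: "x \<in> V" and x0: "fabs V \<mu> x = 0"
  shows "x = 0"
proof -
  have "fle \<mu> (- x) 0" using fabs_ge_minus[OF x] x0 by simp
  then have "fle \<mu> 0 x" using fle_minus[OF carrier_neg[OF x] carrier_0] by simp
  then show ?thesis using fabs_ge[OF x] x0 fle_antisym x carrier_0 by simp
qed

lemma fabs_triangle:
  assumes a: "a \<in> V" and b: "b \<in> V"
  shows "fle \<mu> (fabs V \<mu> (a + b)) (fabs V \<mu> a + fabs V \<mu> b)"
proof -
  have "fle \<mu> (a + b) (fabs V \<mu> a + fabs V \<mu> b)"
    using fle_add_mono[OF a fabs_in[OF a] b fabs_in[OF b] fabs_ge[OF a] fabs_ge[OF b]] .
  moreover have "fle \<mu> (- a + - b) (fabs V \<mu> a + fabs V \<mu> b)"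
    using fle_add_mono[OF carrier_neg[OF a] fabs_in[OF a] carrier_neg[OF b] fabs_in[OF b]
        fabs_ge_minus[OF a] fabs_ge_minus[OF b]] .
  ultimately show ?thesis
    unfolding fabs_def[of V \<mu> "a + b"]
    using fsup_least[OF carrier_add[OF a b] carrier_neg[OF carrier_add[OF a b]]
        carrier_add[OF fabs_in[OF a] fabs_in[OF b]]]
    by (simp add: add.commute)
qed

lemma least_element_eq_0:
  assumes s: "s \<in> V" and least: "\<forall>u\<in>V. fle \<mu> s u"
  shows "s = 0"
proof -
  have "fle \<mu> (s + 0) (s + - fabs V \<mu> s)"
    using least carrier_add[OF s carrier_neg[OF fabs_in[OF s]]] by simp
  then have "fle \<mu> 0 (- fabs V \<mu> s)"
    using fle_add_right_cancel carrier_0 carrier_neg fabs_in s by (metis add.commute)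
  then have "fle \<mu> (fabs V \<mu> s) 0"
    using fle_minus[OF carrier_0 carrier_neg[OF fabs_in[OF s]]] by simp
  then show ?thesis
    using fabs_nonneg[OF s] fle_antisym fabs_in s carrier_0 fabs_eq_0D by blast
qed

lemma fdisjoint_sym: "fdisjoint V \<mu> x y \<Longrightarrow> fdisjoint V \<mu> y x"
  unfolding fdisjoint_def using finf_commute by metis

lemma fdisjoint_0: "y \<in> V \<Longrightarrow> fdisjoint V \<mu> 0 y"
  unfolding fdisjoint_def fabs_0 using finf_absorb1[OF carrier_0 fabs_in fabs_nonneg] by simp

lemma fdisjoint_selfD: "x \<in> V \<Longrightarrow> fdisjoint V \<mu> x x \<Longrightarrow> x = 0"
  unfolding fdisjoint_def using finf_absorb1[OF fabs_in fabs_in fle_refl[OF fabs_in]] fabs_eq_0D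
  by simp

lemma fdisjoint_fabs_mono:
  assumes c: "c \<in> V" and x: "x \<in> V" and y: "y \<in> V" and d: "fdisjoint V \<mu> c y"
    and le: "fle \<mu> (fabs V \<mu> x) (fabs V \<mu> y)"
  shows "fdisjoint V \<mu> c x"
proof -
  let ?i = "finf V \<mu> (fabs V \<mu> c) (fabs V \<mu> x)"
  have i: "?i \<in> V" using finf_in fabs_in c x by blast
  have "fle \<mu> ?i (fabs V \<mu> y)"
    using fle_trans[OF i fabs_in[OF x] fabs_in[OF y] finf_lower2 le] fabs_in c x by blast
  then have "fle \<mu> ?i 0"
    using finf_greatest[OF fabs_in[OF c] fabs_in[OF y] i] finf_lower1 fabs_in c x d
    unfolding fdisjoint_def by simp
  moreover have "fle \<mu> 0 ?i"
    using finf_greatest[OF fabs_in[OF c] fabs_in[OF x] carrier_0 fabs_nonneg[OF c] fabs_nonneg[OF x]] .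
  ultimately show ?thesis unfolding fdisjoint_def using fle_antisym[OF i carrier_0] by blast
qed

lemma nonneg_fle_add_disjoint_eq_0:
  assumes p: "p \<in> V" and q: "q \<in> V" and r: "r \<in> V"
    and p0: "fle \<mu> 0 p" and r0: "fle \<mu> 0 r"
    and pq: "finf V \<mu> p q = 0" and pr: "finf V \<mu> p r = 0" and le: "fle \<mu> p (q + r)"
  shows "p = 0"
proof -
  have "fle \<mu> (p - r) q" using fle_add_right_cancel[of "p - r" q r] le p q r by (simp add: carrier_diff)
  moreover have "fle \<mu> (p - r) p"
    using fle_add_right[OF carrier_0 r carrier_diff[OF p r] r0] by (simp add: add.commute)
  ultimately have "fle \<mu> (p - r) 0" using finf_greatest[OF p q carrier_diff[OF p r]] pq by simp
  then have "fle \<mu> p r" using fle_iff_diff_fle_0 p r by blast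
  then have "fle \<mu> p 0" using finf_greatest[OF p r p fle_refl[OF p]] pr by simp
  then show ?thesis using p0 fle_antisym p carrier_0 by blast
qed

lemma fdisjoint_add_self_eq_0:
  assumes c: "c \<in> V" and x: "x \<in> V"
    and cx: "fdisjoint V \<mu> c x" and cxc: "fdisjoint V \<mu> c (x + c)"
  shows "c = 0"
proof -
  have "fle \<mu> (fabs V \<mu> ((x + c) + - x)) (fabs V \<mu> (x + c) + fabs V \<mu> (- x))"
    using fabs_triangle[OF carrier_add[OF x c] carrier_neg[OF x]] .
  then have "fle \<mu> (fabs V \<mu> c) (fabs V \<mu> (x + c) + fabs V \<mu> x)" by (simp add: fabs_minus)
  then have "fabs V \<mu> c = 0"
    using nonneg_fle_add_disjoint_eq_0[OF fabs_in[OF c] fabs_in[OF carrier_add[OF x c]] fabs_in[OF x]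
        fabs_nonneg[OF c] fabs_nonneg[OF x]] cx cxc
    unfolding fdisjoint_def by simp
  then show ?thesis using fabs_eq_0D c by blast
qed

lemma fdisjoint_fle_imp_nonpos:
  assumes u: "u \<in> V" and v: "v \<in> V" and d: "fdisjoint V \<mu> u v" and uv: "fle \<mu> u v"
  shows "fle \<mu> u 0"
proof -
  let ?w = "fsup V \<mu> u 0"
  have w: "?w \<in> V" using fsup_in u carrier_0 by blast
  have "fle \<mu> u (fabs V \<mu> v)" using fle_trans[OF u v fabs_in[OF v] uv fabs_ge[OF v]] .
  then have "fle \<mu> ?w (fabs V \<mu> v)"
    using fsup_least[OF u carrier_0 fabs_in[OF v] _ fabs_nonneg[OF v]] by simp
  moreover have "fle \<mu> ?w (fabs V \<mu> u)"
    using fsup_least[OF u carrier_0 fabs_in[OF u] fabs_ge[OF u] fabs_nonneg[OF u]] .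
  ultimately have "fle \<mu> ?w 0"
    using finf_greatest[OF fabs_in[OF u] fabs_in[OF v] w] d unfolding fdisjoint_def by simp
  then show ?thesis using fle_trans[OF u w carrier_0 fsup_upper1[OF u carrier_0]] by simp
qed

lemma fdisjoint_fle_nonpos_eq_0:
  assumes u: "u \<in> V" and v: "v \<in> V" and d: "fdisjoint V \<mu> u v"
    and uv: "fle \<mu> u v" and v0: "fle \<mu> v 0"
  shows "v = 0"
proof -
  have "fle \<mu> u 0" using fle_trans[OF u v carrier_0 uv v0] .
  then have "fle \<mu> (fabs V \<mu> v) (fabs V \<mu> u)"
    using fabs_nonpos[OF u] fabs_nonpos[OF v v0] fle_minus[OF u v uv] by simp
  then have "fdisjoint V \<mu> v v"
    using fdisjoint_fabs_mono[OF v v u fdisjoint_sym[OF d]] by blast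
  then show ?thesis using fdisjoint_selfD v by blast
qed

context
  fixes A :: "'a set"
  assumes subspace_A: "subspace A" and A_subset: "A \<subseteq> V"
    and sum_disjoint_compl: "\<And>x. x \<in> V \<Longrightarrow> \<exists>a\<in>A. \<exists>c\<in>fdisjoint_compl V \<mu> A. x = a + c"
begin

lemma fuzzy_ideal_if_sum_disjoint_compl: "fuzzy_ideal V \<mu> A"
  unfolding fuzzy_ideal_def
proof (intro conjI ballI impI subspace_A A_subset)
  fix x y assume x: "x \<in> V" and y: "y \<in> A"
    and le: "fle \<mu> (fabs V \<mu> x) (fabs V \<mu> y)"
  obtain a c where a: "a \<in> A" and c: "c \<in> fdisjoint_compl V \<mu> A" and x_eq: "x = a + c"
    using sum_disjoint_compl[OF x] by blast
  have cV: "c \<in> V" and c_disj: "\<And>b. b \<in> A \<Longrightarrow> fdisjoint V \<mu> c b"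
    using c unfolding fdisjoint_compl_def by auto
  have "fdisjoint V \<mu> c (a + c)"
    using fdisjoint_fabs_mono[OF cV x _ c_disj[OF y] le] y A_subset x_eq by blast
  then have "c = 0"
    using fdisjoint_add_self_eq_0[OF cV _ c_disj[OF a]] a A_subset by blast
  then show "x \<in> A" using x_eq a by simp
qed

lemma fuzzy_band_if_sum_disjoint_compl: "fuzzy_band V \<mu> A"
  unfolding fuzzy_band_def
proof (intro conjI allI impI fuzzy_ideal_if_sum_disjoint_compl)
  fix D s assume D: "D \<subseteq> A" and s: "is_fsup V \<mu> D s"
  then have sV: "s \<in> V" unfolding is_fsup_def by blast
  obtain a c where a: "a \<in> A" and c: "c \<in> fdisjoint_compl V \<mu> A" and s_eq: "s = a + c"
    using sum_disjoint_compl[OF sV] by blast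
  have aV: "a \<in> V" and cV: "c \<in> V" and c_disj: "\<And>b. b \<in> A \<Longrightarrow> fdisjoint V \<mu> c b"
    using a c A_subset unfolding fdisjoint_compl_def by auto
  have diff_in: "d - a \<in> A" if "d \<in> D" for d
    using real_vector.subspace_diff[OF subspace_A] that D a by blast
  have diff_le: "fle \<mu> (d - a) c" if d: "d \<in> D" for d
  proof -
    have "fle \<mu> (d - a + a) (c + a)"
      using s d s_eq unfolding is_fsup_def by (simp add: add.commute)
    then show ?thesis
      using fle_add_right_cancel cV aV diff_in[OF d] A_subset by blast
  qed
  have diff_nonpos: "fle \<mu> (d - a) 0" if d: "d \<in> D" for d
  proof -
    have "d - a \<in> V" using diff_in[OF d] A_subset by blast
    then show ?thesis
      using fdisjoint_fle_imp_nonpos cV fdisjoint_sym[OF c_disj[OF diff_in[OF d]]] diff_le[OF d]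
      by blast
  qed
  have "fle \<mu> s a"
    using s aV diff_nonpos fle_iff_diff_fle_0 D A_subset unfolding is_fsup_def by blast
  then have c_nonpos: "fle \<mu> c 0"
    using fle_add_right_cancel[OF cV carrier_0 aV] s_eq by (simp add: add.commute)
  show "s \<in> A"
  proof (cases "D = {}")
    case True
    then have "s = 0" using least_element_eq_0[OF sV] s unfolding is_fsup_def by blast
    then show ?thesis using real_vector.subspace_0[OF subspace_A] by simp
  next
    case False
    then obtain d where d: "d \<in> D" by blast
    have "c = 0"
      using fdisjoint_fle_nonpos_eq_0[OF _ cV fdisjoint_sym[OF c_disj[OF diff_in[OF d]]]
          diff_le[OF d] c_nonpos] diff_in[OF d] A_subset by blast
    then show ?thesis using s_eq a by simp
  qed
qed

lemma fuzzy_projection_band_if_sum_disjoint_compl: "fuzzy_projection_band V \<mu> A"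
proof -
  have "A \<inter> fdisjoint_compl V \<mu> A \<subseteq> {0}"
    unfolding fdisjoint_compl_def using fdisjoint_selfD by blast
  moreover have "0 \<in> A \<inter> fdisjoint_compl V \<mu> A"
    unfolding fdisjoint_compl_def
    using real_vector.subspace_0[OF subspace_A] carrier_0 fdisjoint_0 A_subset by blast
  ultimately show ?thesis
    unfolding fuzzy_projection_band_def
    using fuzzy_band_if_sum_disjoint_compl sum_disjoint_compl by blast
qed

end

lemma is_fsup_subset: "is_fsup V \<mu> D s \<Longrightarrow> s \<in> W \<Longrightarrow> W \<subseteq> V \<Longrightarrow> is_fsup W \<mu> D s"
  unfolding is_fsup_def by blast

context
  fixes W :: "'a set"
  assumes subspace_W: "subspace W" and W_subset: "W \<subseteq> V"
    and fsup_closed: "\<And>x y. x \<in> W \<Longrightarrow> y \<in> W \<Longrightarrow> fsup V \<mu> x y \<in> W"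
begin

lemma riesz_space_on_subspace: "riesz_space_on W \<mu>"
proof
  show "subspace W" by (rule subspace_W)
  show "\<exists>s. is_fsup W \<mu> {x, y} s" if "x \<in> W" "y \<in> W" for x y
    using is_fsup_subset[OF is_fsup_fsup fsup_closed W_subset] that W_subset by blast
qed (use W_subset in \<open>meson fle_refl fle_antisym fle_trans fle_add_right fle_scaleR subsetD\<close>)+

lemma fsup_subspace: "x \<in> W \<Longrightarrow> y \<in> W \<Longrightarrow> fsup W \<mu> x y = fsup V \<mu> x y"
  using riesz_space_on.fsup_eqI[OF riesz_space_on_subspace]
    is_fsup_subset[OF is_fsup_fsup fsup_closed W_subset] W_subset by blast

end

end

lemma fuzzy_riesz_space_imp_riesz_space_on:
  assumes "fuzzy_riesz_space V \<mu>"
  shows "riesz_space_on V \<mu>"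
proof -
  have ol: "fuzzy_ordered_linear_space V \<mu>" and fo: "fuzzy_order V \<mu>"
    using assms unfolding fuzzy_riesz_space_def fuzzy_ordered_linear_space_def by blast+
  have bounded: "\<And>x y. x \<in> V \<Longrightarrow> y \<in> V \<Longrightarrow> \<mu> x y \<le> 1"
    and diag: "\<And>x. x \<in> V \<Longrightarrow> \<mu> x x = 1"
    and antisym: "\<And>x y. x \<in> V \<Longrightarrow> y \<in> V \<Longrightarrow> \<mu> x y + \<mu> y x > 1 \<Longrightarrow> x = y"
    and trans: "\<And>x z. x \<in> V \<Longrightarrow> z \<in> V \<Longrightarrow> \<mu> x z \<ge> (SUP y\<in>V. min (\<mu> x y) (\<mu> y z))"
    using fo unfolding fuzzy_order_def by blast+
  have translate: "\<And>x y z. x \<in> V \<Longrightarrow> y \<in> V \<Longrightarrow> z \<in> V \<Longrightarrow> \<mu> x y > 1/2 \<Longrightarrow>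
      \<mu> x y \<le> \<mu> (x + z) (y + z)"
    and scale: "\<And>x y a. x \<in> V \<Longrightarrow> y \<in> V \<Longrightarrow> \<mu> x y > 1/2 \<Longrightarrow> (a::real) > 0 \<Longrightarrow>
      \<mu> x y \<le> \<mu> (a *\<^sub>R x) (a *\<^sub>R y)"
    using ol unfolding fuzzy_ordered_linear_space_def by blast+
  show ?thesis
  proof
    show "subspace V" using ol unfolding fuzzy_ordered_linear_space_def by blast
    show "fle \<mu> x x" if "x \<in> V" for x unfolding fle_def using diag that by simp
    show "x = y" if "x \<in> V" "y \<in> V" "fle \<mu> x y" "fle \<mu> y x" for x y
      using that antisym[of x y] unfolding fle_def by linarith
    show "fle \<mu> x z" if "x \<in> V" "y \<in> V" "z \<in> V" "fle \<mu> x y" "fle \<mu> y z" for x y z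
    proof -
      have "bdd_above ((\<lambda>y. min (\<mu> x y) (\<mu> y z)) ` V)"
        by (rule bdd_aboveI[of _ 1]) (use that bounded in \<open>auto simp: min.coboundedI1\<close>)
      then have "min (\<mu> x y) (\<mu> y z) \<le> (SUP y\<in>V. min (\<mu> x y) (\<mu> y z))"
        by (rule cSUP_upper[OF \<open>y \<in> V\<close>])
      then show ?thesis using trans[of x z] that unfolding fle_def by linarith
    qed
    show "fle \<mu> (x + z) (y + z)" if "x \<in> V" "y \<in> V" "z \<in> V" "fle \<mu> x y" for x y z
      using that translate[of x y z] unfolding fle_def by linarith
    show "fle \<mu> (a *\<^sub>R x) (a *\<^sub>R y)" if "x \<in> V" "y \<in> V" "a > 0" "fle \<mu> x y" for x y and a :: real
      using that scale[of x y a] unfolding fle_def by linarith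
    show "\<exists>s. is_fsup V \<mu> {x, y} s" if "x \<in> V" "y \<in> V" for x y
      using assms that unfolding fuzzy_riesz_space_def by blast
  qed
qed

lemma fdisjoint_riesz_hom:
  assumes E: "riesz_space_on V \<mu>" and F: "riesz_space_on W \<nu>"
    and lin: "linear T" and maps: "T ` V \<subseteq> W"
    and T_fsup: "\<And>a b. a \<in> V \<Longrightarrow> b \<in> V \<Longrightarrow> T (fsup V \<mu> a b) = fsup W \<nu> (T a) (T b)"
    and a: "a \<in> V" and b: "b \<in> V" and ab: "fdisjoint V \<mu> a b"
  shows "fdisjoint W \<nu> (T a) (T b)"
proof -
  have T_finf: "T (finf V \<mu> x y) = finf W \<nu> (T x) (T y)" if "x \<in> V" "y \<in> V" for x y
    using riesz_space_on.finf_eq_minus_fsup_minus[OF E] riesz_space_on.finf_eq_minus_fsup_minus[OF F]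
      T_fsup riesz_space_on.carrier_neg[OF E] linear_neg[OF lin] maps that by (simp add: image_subset_iff)
  have T_fabs: "T (fabs V \<mu> x) = fabs W \<nu> (T x)" if "x \<in> V" for x
    unfolding fabs_def using T_fsup riesz_space_on.carrier_neg[OF E] linear_neg[OF lin] that by simp
  show ?thesis
    using ab T_finf T_fabs riesz_space_on.fabs_in[OF E] a b linear_0[OF lin]
    unfolding fdisjoint_def by metis
qed

context
  fixes \<mu> :: "'a::real_vector \<Rightarrow> 'a \<Rightarrow> real" and \<nu> :: "'b::real_vector \<Rightarrow> 'b \<Rightarrow> real"
    and T :: "'a \<Rightarrow> 'b"
  assumes riesz_E: "riesz_space_on UNIV \<mu>" and riesz_F: "riesz_space_on UNIV \<nu>"
    and hom: "fuzzy_riesz_hom \<mu> \<nu> T"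
begin

lemma linear_hom: "linear T"
  using hom unfolding fuzzy_riesz_hom_def by blast

lemma fsup_range_closed:
  assumes "x \<in> range T" "y \<in> range T"
  shows "fsup UNIV \<nu> x y \<in> range T"
proof -
  obtain a b where "x = T a" "y = T b" using assms by blast
  then have "fsup UNIV \<nu> x y = T (fsup UNIV \<mu> a b)"
    using hom unfolding fuzzy_riesz_hom_def by simp
  then show ?thesis by simp
qed

lemma subspace_range: "subspace (range T)"
  using real_vector.linear_subspace_image[OF linear_hom real_vector.subspace_UNIV] .

lemma riesz_space_on_range: "riesz_space_on (range T) \<nu>"
  using riesz_space_on.riesz_space_on_subspace[OF riesz_F subspace_range subset_UNIV fsup_range_closed] .

lemma fsup_range: "T (fsup UNIV \<mu> a b) = fsup (range T) \<nu> (T a) (T b)"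
proof -
  have "fsup (range T) \<nu> (T a) (T b) = fsup UNIV \<nu> (T a) (T b)"
    using riesz_space_on.fsup_subspace[OF riesz_F subspace_range subset_UNIV fsup_range_closed]
    by blast
  then show ?thesis using hom unfolding fuzzy_riesz_hom_def by simp
qed

lemma fdisjoint_range:
  "fdisjoint UNIV \<mu> a b \<Longrightarrow> fdisjoint (range T) \<nu> (T a) (T b)"
  using fdisjoint_riesz_hom[OF riesz_E riesz_space_on_range linear_hom _ fsup_range] by blast

lemma image_fdisjoint_compl_subset:
  "T ` fdisjoint_compl UNIV \<mu> A \<subseteq> fdisjoint_compl (range T) \<nu> (T ` A)"
  unfolding fdisjoint_compl_def using fdisjoint_range by blast

end

theorem theorem2p8:
  fixes \<mu> :: "'a::real_vector \<Rightarrow> 'a \<Rightarrow> real"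
    and \<nu> :: "'b::real_vector \<Rightarrow> 'b \<Rightarrow> real"
    and T :: "'a \<Rightarrow> 'b"
    and B :: "'a set"
  assumes "fuzzy_riesz_space UNIV \<mu>"
    and "fuzzy_riesz_space UNIV \<nu>"
    and "fuzzy_riesz_hom \<mu> \<nu> T"
    and "fuzzy_projection_band UNIV \<mu> B"
  shows "fuzzy_projection_band (range T) \<nu> (T ` B)"
proof -
  have E: "riesz_space_on UNIV \<mu>" and F: "riesz_space_on UNIV \<nu>"
    using assms(1,2) by (simp_all add: fuzzy_riesz_space_imp_riesz_space_on)
  interpret TE: riesz_space_on "range T" \<nu>
    using riesz_space_on_range[OF E F assms(3)] .
  have lin: "linear T" using linear_hom[OF E F assms(3)] .
  have "subspace B"
    using assms(4) unfolding fuzzy_projection_band_def fuzzy_band_def fuzzy_ideal_def by blast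
  have B_sum: "\<exists>b\<in>B. \<exists>c\<in>fdisjoint_compl UNIV \<mu> B. x = b + c" for x
    using assms(4) unfolding fuzzy_projection_band_def by blast
  show ?thesis
  proof (rule TE.fuzzy_projection_band_if_sum_disjoint_compl)
    show "subspace (T ` B)" using real_vector.linear_subspace_image[OF lin \<open>subspace B\<close>] .
    show "T ` B \<subseteq> range T" by blast
    fix x assume "x \<in> range T"
    then obtain a b c where "x = T a" "b \<in> B" "c \<in> fdisjoint_compl UNIV \<mu> B" "a = b + c"
      using B_sum by blast
    then show "\<exists>b\<in>T ` B. \<exists>c\<in>fdisjoint_compl (range T) \<nu> (T ` B). x = b + c"
      using image_fdisjoint_compl_subset[OF E F assms(3)] linear_add[OF lin] by blast
  qed
qed

end
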